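(* Consider a run of the algorithm CTG (defined in the context), with $f(\emptyset)=0$, in which the events $\mathcal{E}_1,\mathcal{E}_2,\mathcal{E}_3$ (defined in the context) all hold. Then whenever an element $s$ is added to the solution set $S$ (with $S$ denoting the solution set just before the addition), $$\Delta f(S,s)\ge\frac{1-\alpha}{\kappa}\big(f(OPT)-f(S)\big)-2\epsilon.$$
   Context: Let $U$ be a finite ground set with $|U|=n$, and let $f:2^U\to\mathbb{R}_{\geq 0}$ be monotone and submodular. For $X\subseteq U$, $u\in U$, write $\Delta f(X,u)=f(X\cup\{u\})-f(X)$. Let $\kappa$ be a positive integer and let $OPT$ be an optimal solution of $\max\{f(X): X\subseteq U,|X|\le\kappa\}$. There is no value oracle for $f$; instead, for any $X\subseteq U$, $u\in U$, one can draw independent samples from a distribution $\mathcal{D}(X,u)$ with $\mathbb{E}[\mathcal{D}(X,u)]=\Delta f(X,u)$ and all samples lying in $[0,R]$; all samples drawn are independent. Logarithms are natural; $h(\alpha)=\log(\kappa/\alpha)/\alpha$. For a call of CS on $(S,u)$, regard its samples as initial terms of an infinite i.i.d. sequence from $\mathcal{D}(S,u)$ and let $\widehat{\Delta f_t}(S,u)$ be the average of the first $t$ terms. Procedure CS$(w,\epsilon,\delta,S,u)$: let $N_2=R^2\log(6nh(\alpha)/\delta)/(2\epsilon^2)$. For $t=1,2,\dots,N_2$: draw the $t$-th sample, update $\widehat{\Delta f_t}(S,u)$, set $C_t=R\sqrt{\log(12nh(\alpha)t^2/\delta)/(2t)}$; if $\widehat{\Delta f_t}(S,u)-C_t\ge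 w-\epsilon$ return true; else if $\widehat{\Delta f_t}(S,u)+C_t\le w+\epsilon$ return false. If the loop completes, return true iff $\widehat{\Delta f_{N_2}}(S,u)\ge w$. Algorithm CTG$(\epsilon,\delta,\alpha)$ with $\epsilon,\delta,\alpha\in(0,1)$: let $N_1=R^2\log(6n/\delta)/(2\epsilon^2)$. For each $s\in U$ let $\hat f(s)$ be the mean of $N_1$ samples from $\mathcal{D}(\emptyset,s)$, and let $d=\max_{s\in U}\hat f(s)$. Set $w\gets d$, $S\gets\emptyset$. While $w>\alpha d/\kappa$: for each $u\in U$ in turn, if $|S|<\kappa$, call CS$(w,\epsilon,\delta,S,u)$ and if it returns true set $S\gets S\cup\{u\}$; after the pass set $w\gets w(1-\alpha)$. Return $S$. Events: $\mathcal{E}_1$: $\max_{s\in U}f(\{s\})-\epsilon\le d\le\max_{s\in U}f(\{s\})+\epsilon$. $\mathcal{E}_2$: for every call of CS on a pair $(S,u)$ and every $t\in\mathbb{N}_+$, $|\widehat{\Delta f_t}(S,u)-\Delta f(S,u)|\le C_t$. $\mathcal{E}_3$: for every call of CS on a pair $(S,u)$, $|\widehat{\Delta f_{N_2}}(S,u)-\Delta f(S,u)|\le\epsilon$. *)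

theory Defs
  imports "HOL-Analysis.Analysis"
begin

definition Delta :: "('a set \<Rightarrow> real) \<Rightarrow> 'a set \<Rightarrow> 'a \<Rightarrow> real" where
  "Delta f X u = f (insert u X) - f X"

definition monotone_set_fun :: "'a set \<Rightarrow> ('a set \<Rightarrow> real) \<Rightarrow> bool" where
  "monotone_set_fun U f \<longleftrightarrow> (\<forall>X Y. X \<subseteq> Y \<and> Y \<subseteq> U \<longrightarrow> f X \<le> f Y)"

definition submodular_set_fun :: "'a set \<Rightarrow> ('a set \<Rightarrow> real) \<Rightarrow> bool" where
  "submodular_set_fun U f \<longleftrightarrow>
     (\<forall>X Y x. X \<subseteq> Y \<and> Y \<subseteq> U \<and> x \<in> U - Y \<longrightarrow> Delta f Y x \<le> Delta f X x)"

definition hfun :: "nat \<Rightarrow> real \<Rightarrow> real" where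
  "hfun \<kappa> \<alpha> = ln (real \<kappa> / \<alpha>) / \<alpha>"

text \<open>Average of the first t terms of a sample sequence (the t-th sample is xs (t-1)).\<close>
definition avg :: "(nat \<Rightarrow> real) \<Rightarrow> nat \<Rightarrow> real" where
  "avg xs t = (\<Sum>i<t. xs i) / real t"

definition N1 :: "real \<Rightarrow> nat \<Rightarrow> real \<Rightarrow> real \<Rightarrow> nat" where
  "N1 R n \<epsilon> \<delta> = nat \<lceil>R\<^sup>2 * ln (6 * real n / \<delta>) / (2 * \<epsilon>\<^sup>2)\<rceil>"

definition N2 :: "real \<Rightarrow> nat \<Rightarrow> nat \<Rightarrow> real \<Rightarrow> real \<Rightarrow> real \<Rightarrow> nat" where
  "N2 R n \<kappa> \<alpha> \<epsilon> \<delta> = nat \<lceil>R\<^sup>2 * ln (6 * real n * hfun \<kappa> \<alpha> / \<delta>) / (2 * \<epsilon>\<^sup>2)\<rceil>"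

definition Ct :: "real \<Rightarrow> nat \<Rightarrow> nat \<Rightarrow> real \<Rightarrow> real \<Rightarrow> nat \<Rightarrow> real" where
  "Ct R n \<kappa> \<alpha> \<delta> t =
     R * sqrt (ln (12 * real n * hfun \<kappa> \<alpha> * (real t)\<^sup>2 / \<delta>) / (2 * real t))"

text \<open>Procedure CS, run on the (infinite) sample sequence xs of the call.\<close>
definition CS :: "real \<Rightarrow> nat \<Rightarrow> nat \<Rightarrow> real \<Rightarrow> real \<Rightarrow> real \<Rightarrow> real \<Rightarrow> (nat \<Rightarrow> real) \<Rightarrow> bool" where
  "CS R n \<kappa> \<alpha> \<epsilon> \<delta> w xs =
    (let N = N2 R n \<kappa> \<alpha> \<epsilon> \<delta>;
         up = (\<lambda>t. avg xs t - Ct R n \<kappa> \<alpha> \<delta> t \<ge> w - \<epsilon>);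
         lo = (\<lambda>t. avg xs t + Ct R n \<kappa> \<alpha> \<delta> t \<le> w + \<epsilon>)
     in case find (\<lambda>t. up t \<or> lo t) [1..<N+1] of
          Some t \<Rightarrow> up t
        | None \<Rightarrow> avg xs N \<ge> w)"

text \<open>State of CTG: current solution S and the log of all CS calls made so far,
  each entry (S, u, w, result) recording the solution before the call, the element,
  the threshold and the returned value. The k-th call (0-based) uses the sample
  sequence smp k.\<close>
type_synonym 'a ctg_state = "'a set \<times> ('a set \<times> 'a \<times> real \<times> bool) list"

definition ctg_step :: "real \<Rightarrow> nat \<Rightarrow> nat \<Rightarrow> real \<Rightarrow> real \<Rightarrow> real \<Rightarrow> real
    \<Rightarrow> (nat \<Rightarrow> nat \<Rightarrow> real) \<Rightarrow> 'a ctg_state \<Rightarrow> 'a \<Rightarrow> 'a ctg_state" where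
  "ctg_step R n \<kappa> \<alpha> \<epsilon> \<delta> w smp st u =
    (case st of (S, lg) \<Rightarrow>
      if card S < \<kappa> then
        (let r = CS R n \<kappa> \<alpha> \<epsilon> \<delta> w (smp (length lg))
         in (if r then insert u S else S, lg @ [(S, u, w, r)]))
      else (S, lg))"

definition ctg_pass :: "real \<Rightarrow> nat \<Rightarrow> real \<Rightarrow> real \<Rightarrow> real \<Rightarrow> 'a list \<Rightarrow> real
    \<Rightarrow> (nat \<Rightarrow> nat \<Rightarrow> real) \<Rightarrow> 'a ctg_state \<Rightarrow> 'a ctg_state" where
  "ctg_pass R \<kappa> \<alpha> \<epsilon> \<delta> us w smp st =
     foldl (ctg_step R (length us) \<kappa> \<alpha> \<epsilon> \<delta> w smp) st us"

text \<open>The value d computed from the initial samples smp0 s of D(emptyset, s).\<close>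
definition ctg_d :: "real \<Rightarrow> real \<Rightarrow> real \<Rightarrow> 'a list \<Rightarrow> ('a \<Rightarrow> nat \<Rightarrow> real) \<Rightarrow> real" where
  "ctg_d R \<epsilon> \<delta> us smp0 =
     Max ((\<lambda>s. avg (smp0 s) (N1 R (length us) \<epsilon> \<delta>)) ` set us)"

text \<open>Number of passes of the while loop: w = d (1-alpha)^p in pass p.\<close>
definition ctg_npasses :: "real \<Rightarrow> nat \<Rightarrow> real \<Rightarrow> nat" where
  "ctg_npasses d \<kappa> \<alpha> = (LEAST p. \<not> (d * (1 - \<alpha>) ^ p > \<alpha> * d / real \<kappa>))"

definition ctg_run :: "real \<Rightarrow> nat \<Rightarrow> real \<Rightarrow> real \<Rightarrow> real \<Rightarrow> 'a list
    \<Rightarrow> ('a \<Rightarrow> nat \<Rightarrow> real) \<Rightarrow> (nat \<Rightarrow> nat \<Rightarrow> real) \<Rightarrow> 'a ctg_state" where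
  "ctg_run R \<kappa> \<alpha> \<epsilon> \<delta> us smp0 smp =
    (let d = ctg_d R \<epsilon> \<delta> us smp0
     in foldl (\<lambda>st p. ctg_pass R \<kappa> \<alpha> \<epsilon> \<delta> us (d * (1 - \<alpha>) ^ p) smp st)
              ({}, []) [0..<ctg_npasses d \<kappa> \<alpha>])"

end

theory Submission
  imports Defs
begin

text \<open>When CTG accepts \<open>s\<close> at threshold \<open>w\<close>, the sequential test certifies
  \<open>\<Delta>f(S, s) \<ge> w - \<epsilon>\<close> (events E2 and E3). Conversely, every marginal gain \<open>\<Delta>f(S, x)\<close>
  is at most some \<open>B\<close> with \<open>(1 - \<alpha>) B \<le> w + \<epsilon>\<close>: at the first threshold \<open>w = d\<close> take
  \<open>B = max f{x} \<le> d + \<epsilon>\<close> (event E1); at a later threshold, during the previous pass at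
  threshold \<open>w / (1 - \<alpha>)\<close> every element outside \<open>S\<close> was rejected against a subset of \<open>S\<close>
  (otherwise the solution was already full and no call is made any more), so by submodularity
  \<open>\<Delta>f(S, x) \<le> w / (1 - \<alpha>) + \<epsilon>\<close>. Monotonicity and submodularity then give
  \<open>f(OPT) - f(S) \<le> \<kappa> B\<close>.\<close>

lemma submodular_gap_le_sum_Delta:
  assumes submod: "submodular_set_fun U f" and fin: "finite A"
    and "A \<subseteq> U - S" "S \<subseteq> U"
  shows "f (S \<union> A) - f S \<le> (\<Sum>a\<in>A. Delta f S a)"
  using fin assms(3)
proof (induction A rule: finite_induct)
  case empty
  then show ?case by simp
next
  case (insert a A)
  have "S \<subseteq> S \<union> A" "S \<union> A \<subseteq> U" "a \<in> U - (S \<union> A)"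
    using insert.prems insert.hyps \<open>S \<subseteq> U\<close> by auto
  then have "Delta f (S \<union> A) a \<le> Delta f S a"
    using submod unfolding submodular_set_fun_def by blast
  moreover have "f (S \<union> insert a A) = f (S \<union> A) + Delta f (S \<union> A) a"
    unfolding Delta_def by simp
  ultimately show ?case using insert by simp
qed

lemma monotone_submodular_gap_le:
  assumes mono: "monotone_set_fun U f" and submod: "submodular_set_fun U f"
    and S: "S \<subseteq> U" and T: "T \<subseteq> U" "finite T" "card T \<le> \<kappa>"
    and B: "\<forall>x\<in>T - S. Delta f S x \<le> B" "0 \<le> B"
  shows "f T - f S \<le> real \<kappa> * B"
proof -
  have "f T \<le> f (S \<union> (T - S))"
    using mono S T unfolding monotone_set_fun_def by auto
  also have "\<dots> \<le> f S + (\<Sum>x\<in>T - S. Delta f S x)"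
    using submodular_gap_le_sum_Delta[OF submod _ _ S, of "T - S"] T by fastforce
  also have "(\<Sum>x\<in>T - S. Delta f S x) \<le> real (card (T - S)) * B"
    using sum_mono[of "T - S" "Delta f S" "\<lambda>_. B"] B by simp
  also have "\<dots> \<le> real \<kappa> * B"
    using T B card_mono[OF \<open>finite T\<close>, of "T - S"] by (intro mult_right_mono) auto
  finally show ?thesis by simp
qed

lemma Delta_le_singleton:
  assumes submod: "submodular_set_fun U f" and "f {} = 0" "S \<subseteq> U" "x \<in> U - S"
  shows "Delta f S x \<le> f {x}"
proof -
  have "Delta f S x \<le> Delta f {} x"
    using assms unfolding submodular_set_fun_def by blast
  then show ?thesis using \<open>f {} = 0\<close> unfolding Delta_def by simp
qed

lemma Delta_ge_scaled_optimality_gap: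
  assumes mono: "monotone_set_fun U f" and submod: "submodular_set_fun U f"
    and S: "S \<subseteq> U" and T: "T \<subseteq> U" "finite T" "card T \<le> \<kappa>"
    and "0 < \<kappa>" "\<alpha> \<le> 1"
    and B: "\<forall>x\<in>T - S. Delta f S x \<le> B" "0 \<le> B" "(1 - \<alpha>) * B \<le> w + \<epsilon>"
    and accept: "w - \<epsilon> \<le> Delta f S s"
  shows "Delta f S s \<ge> (1 - \<alpha>) / real \<kappa> * (f T - f S) - 2 * \<epsilon>"
proof -
  have "(1 - \<alpha>) / real \<kappa> * (f T - f S) \<le> (1 - \<alpha>) / real \<kappa> * (real \<kappa> * B)"
    using monotone_submodular_gap_le[OF mono submod S T B(1,2)] \<open>\<alpha> \<le> 1\<close>
    by (intro mult_left_mono) auto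
  also have "\<dots> = (1 - \<alpha>) * B" using \<open>0 < \<kappa>\<close> by simp
  finally show ?thesis using B accept by linarith
qed

lemma CS_threshold_bounds:
  assumes confidence: "\<forall>t\<ge>1. \<bar>avg xs t - D\<bar> \<le> Ct R n \<kappa> \<alpha> \<delta> t"
    and final: "\<bar>avg xs (N2 R n \<kappa> \<alpha> \<epsilon> \<delta>) - D\<bar> \<le> \<epsilon>"
  shows "CS R n \<kappa> \<alpha> \<epsilon> \<delta> w xs \<Longrightarrow> w - \<epsilon> \<le> D"
    and "\<not> CS R n \<kappa> \<alpha> \<epsilon> \<delta> w xs \<Longrightarrow> D \<le> w + \<epsilon>"
proof -
  let ?C = "Ct R n \<kappa> \<alpha> \<delta>"
  let ?stop = "\<lambda>t. w - \<epsilon> \<le> avg xs t - ?C t \<or> avg xs t + ?C t \<le> w + \<epsilon>"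
  have "(CS R n \<kappa> \<alpha> \<epsilon> \<delta> w xs \<longrightarrow> w - \<epsilon> \<le> D) \<and> (\<not> CS R n \<kappa> \<alpha> \<epsilon> \<delta> w xs \<longrightarrow> D \<le> w + \<epsilon>)"
  proof (cases "find ?stop [1..<N2 R n \<kappa> \<alpha> \<epsilon> \<delta> + 1]")
    case None
    then show ?thesis using final unfolding CS_def Let_def by (auto simp: abs_le_iff)
  next
    case (Some t)
    then have "t \<in> set [1..<N2 R n \<kappa> \<alpha> \<epsilon> \<delta> + 1] \<and> ?stop t"
      unfolding find_Some_iff by (metis nth_mem)
    then have "1 \<le> t" and "?stop t" by auto
    moreover have "\<bar>avg xs t - D\<bar> \<le> ?C t" using confidence \<open>1 \<le> t\<close> by blast
    ultimately show ?thesis using Some unfolding CS_def Let_def by (auto simp: abs_le_iff)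
  qed
  then show "CS R n \<kappa> \<alpha> \<epsilon> \<delta> w xs \<Longrightarrow> w - \<epsilon> \<le> D"
    and "\<not> CS R n \<kappa> \<alpha> \<epsilon> \<delta> w xs \<Longrightarrow> D \<le> w + \<epsilon>" by blast+
qed

lemma CS_log_sound:
  assumes consistent: "\<forall>k<length L. case L ! k of (_, _, w, r) \<Rightarrow> r = CS R n \<kappa> \<alpha> \<epsilon> \<delta> w (smp k)"
    and E2: "\<forall>k<length L. \<forall>S u w r. L ! k = (S, u, w, r) \<longrightarrow>
               (\<forall>t\<ge>1. \<bar>avg (smp k) t - Delta f S u\<bar> \<le> Ct R n \<kappa> \<alpha> \<delta> t)"
    and E3: "\<forall>k<length L. \<forall>S u w r. L ! k = (S, u, w, r) \<longrightarrow>
               \<bar>avg (smp k) (N2 R n \<kappa> \<alpha> \<epsilon> \<delta>) - Delta f S u\<bar> \<le> \<epsilon>"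
    and entry: "(S, u, w, r) \<in> set L"
  shows "(r \<longrightarrow> w - \<epsilon> \<le> Delta f S u) \<and> (\<not> r \<longrightarrow> Delta f S u \<le> w + \<epsilon>)"
proof -
  obtain k where k: "k < length L" "L ! k = (S, u, w, r)"
    using entry by (auto simp: in_set_conv_nth)
  then have "r = CS R n \<kappa> \<alpha> \<epsilon> \<delta> w (smp k)"
    using consistent by fastforce
  moreover have "\<forall>t\<ge>1. \<bar>avg (smp k) t - Delta f S u\<bar> \<le> Ct R n \<kappa> \<alpha> \<delta> t"
    and "\<bar>avg (smp k) (N2 R n \<kappa> \<alpha> \<epsilon> \<delta>) - Delta f S u\<bar> \<le> \<epsilon>"
    using E2 E3 k by blast+
  ultimately show ?thesis
    using CS_threshold_bounds by blast
qed

definition screened :: "('a set \<times> 'a \<times> real \<times> bool) list \<Rightarrow> 'a set \<Rightarrow> real \<Rightarrow> 'a \<Rightarrow> bool" where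
  "screened L S w x \<longleftrightarrow> x \<in> S \<or> (\<exists>S'. S' \<subseteq> S \<and> (S', x, w, False) \<in> set L)"

definition justified_threshold ::
    "'a set \<Rightarrow> real \<Rightarrow> real \<Rightarrow> ('a set \<times> 'a \<times> real \<times> bool) list \<Rightarrow> 'a set \<Rightarrow> real \<Rightarrow> bool" where
  "justified_threshold U d \<alpha> L S w \<longleftrightarrow>
     (\<exists>p. w = d * (1 - \<alpha>) ^ p \<and> (p = 0 \<or> (\<forall>x\<in>U. screened L S (d * (1 - \<alpha>) ^ (p - 1)) x)))"

lemma screened_mono: "screened L S w x \<Longrightarrow> set L \<subseteq> set L' \<Longrightarrow> S \<subseteq> S' \<Longrightarrow> screened L' S' w x"
  unfolding screened_def by blast

lemma justified_threshold_mono: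
  "justified_threshold U d \<alpha> L S w \<Longrightarrow> set L \<subseteq> set L' \<Longrightarrow> justified_threshold U d \<alpha> L' S w"
  unfolding justified_threshold_def by (blast intro: screened_mono[OF _ _ order_refl])

lemma screened_Delta_le:
  assumes submod: "submodular_set_fun U f" and "S \<subseteq> U" "x \<in> U - S" "screened L S w x"
    and rejected: "\<forall>(S', y, v, r)\<in>set L. \<not> r \<longrightarrow> Delta f S' y \<le> v + \<epsilon>"
  shows "Delta f S x \<le> w + \<epsilon>"
proof -
  obtain S' where S': "S' \<subseteq> S" "(S', x, w, False) \<in> set L"
    using assms(3,4) unfolding screened_def by auto
  then have "S' \<subseteq> S \<and> S \<subseteq> U \<and> x \<in> U - S"
    using assms(2,3) by blast
  then have "Delta f S x \<le> Delta f S' x"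
    using submod unfolding submodular_set_fun_def by blast
  also have "\<dots> \<le> w + \<epsilon>"
    using rejected S'(2) by fastforce
  finally show ?thesis .
qed

lemma justified_threshold_Delta_bound:
  assumes submod: "submodular_set_fun U f" and f_empty: "f {} = 0"
    and nonneg: "\<forall>x\<in>U. 0 \<le> f {x}" and U: "finite U" "U \<noteq> {}" and S: "S \<subseteq> U"
    and justified: "justified_threshold U d \<alpha> L S w"
    and d: "0 \<le> d" "Max ((\<lambda>x. f {x}) ` U) \<le> d + \<epsilon>"
    and \<alpha>: "0 \<le> \<alpha>" "\<alpha> \<le> 1" and \<epsilon>: "0 \<le> \<epsilon>"
    and rejected: "\<forall>(S', y, v, r)\<in>set L. \<not> r \<longrightarrow> Delta f S' y \<le> v + \<epsilon>"
  shows "\<exists>B\<ge>0. (1 - \<alpha>) * B \<le> w + \<epsilon> \<and> (\<forall>x\<in>U - S. Delta f S x \<le> B)"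
proof -
  obtain p where w: "w = d * (1 - \<alpha>) ^ p"
    and previous: "p = 0 \<or> (\<forall>x\<in>U. screened L S (d * (1 - \<alpha>) ^ (p - 1)) x)"
    using justified unfolding justified_threshold_def by blast
  show ?thesis
  proof (cases p)
    case 0
    let ?M = "Max ((\<lambda>x. f {x}) ` U)"
    have "Delta f S x \<le> ?M" if "x \<in> U - S" for x
      using Delta_le_singleton[OF submod f_empty S that] U that by (auto intro: order_trans)
    moreover have "0 \<le> ?M"
      using nonneg U by (meson Max_ge all_not_in_conv finite_imageI image_eqI order_trans)
    moreover have "(1 - \<alpha>) * ?M \<le> w + \<epsilon>"
      using 0 w d \<alpha> \<open>0 \<le> ?M\<close> mult_left_le_one_le[of ?M "1 - \<alpha>"] by simp
    ultimately show ?thesis by blast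
  next
    case (Suc q)
    let ?v = "d * (1 - \<alpha>) ^ q"
    have "Delta f S x \<le> ?v + \<epsilon>" if "x \<in> U - S" for x
      using screened_Delta_le[OF submod S that _ rejected] previous Suc that by auto
    moreover have "0 \<le> ?v + \<epsilon>"
      using d \<alpha> \<epsilon> by simp
    moreover have "(1 - \<alpha>) * (?v + \<epsilon>) \<le> w + \<epsilon>"
    proof -
      have "w = (1 - \<alpha>) * ?v" using w Suc by simp
      moreover have "(1 - \<alpha>) * \<epsilon> \<le> \<epsilon>" using \<alpha> \<epsilon> by (simp add: mult_left_le_one_le)
      ultimately show ?thesis by (simp add: distrib_left)
    qed
    ultimately show ?thesis by blast
  qed
qed

lemma ctg_d_nonneg:
  assumes "x \<in> set us" "\<forall>s\<in>set us. \<forall>i. 0 \<le> smp0 s i"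
  shows "0 \<le> ctg_d R \<epsilon> \<delta> us smp0"
proof -
  have "0 \<le> avg (smp0 x) (N1 R (length us) \<epsilon> \<delta>)"
    unfolding avg_def using assms by (auto intro!: divide_nonneg_nonneg sum_nonneg)
  also have "\<dots> \<le> ctg_d R \<epsilon> \<delta> us smp0"
    unfolding ctg_d_def using assms(1) by (intro Max_ge) auto
  finally show ?thesis .
qed

context
  fixes R :: real and \<kappa> :: nat and \<alpha> \<epsilon> \<delta> :: real and us :: "'a list"
    and smp :: "nat \<Rightarrow> nat \<Rightarrow> real" and d :: real
begin

definition ctg_log_inv :: "'a ctg_state \<Rightarrow> bool" where
  "ctg_log_inv st \<longleftrightarrow> (case st of (S, L) \<Rightarrow>
     S \<subseteq> set us \<and>
     (\<forall>k<length L. case L ! k of (_, _, w, r) \<Rightarrow> r = CS R (length us) \<kappa> \<alpha> \<epsilon> \<delta> w (smp k)) \<and>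
     (\<forall>(S0, u, w, r)\<in>set L. S0 \<subseteq> S \<and> u \<in> set us \<and>
        (r \<longrightarrow> justified_threshold (set us) d \<alpha> L S0 w)))"

definition ctg_pass_inv :: "nat \<Rightarrow> 'a set \<Rightarrow> 'a ctg_state \<Rightarrow> bool" where
  "ctg_pass_inv p D st \<longleftrightarrow> ctg_log_inv st \<and> (case st of (S, L) \<Rightarrow>
     (p = 0 \<or> \<kappa> \<le> card S \<or> (\<forall>x\<in>set us. screened L S (d * (1 - \<alpha>) ^ (p - 1)) x)) \<and>
     (\<forall>x\<in>D. \<kappa> \<le> card S \<or> screened L S (d * (1 - \<alpha>) ^ p) x))"

lemma ctg_pass_inv_step:
  assumes inv: "ctg_pass_inv p D (S, L)" and u: "u \<in> set us"
  shows "ctg_pass_inv p (insert u D) (ctg_step R (length us) \<kappa> \<alpha> \<epsilon> \<delta> (d * (1 - \<alpha>) ^ p) smp (S, L) u)"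
proof (cases "card S < \<kappa>")
  case False
  then show ?thesis using inv unfolding ctg_pass_inv_def ctg_step_def by auto
next
  case True
  let ?w = "d * (1 - \<alpha>) ^ p"
  define r where "r = CS R (length us) \<kappa> \<alpha> \<epsilon> \<delta> ?w (smp (length L))"
  define S' where "S' = (if r then insert u S else S)"
  define L' where "L' = L @ [(S, u, ?w, r)]"
  have step: "ctg_step R (length us) \<kappa> \<alpha> \<epsilon> \<delta> ?w smp (S, L) u = (S', L')"
    using True unfolding ctg_step_def r_def S'_def L'_def by simp
  from inv True have S: "S \<subseteq> set us"
    and consistent: "\<forall>k<length L. case L ! k of (_, _, w, r) \<Rightarrow> r = CS R (length us) \<kappa> \<alpha> \<epsilon> \<delta> w (smp k)"
    and entries: "\<forall>(S0, v, w, r)\<in>set L. S0 \<subseteq> S \<and> v \<in> set us \<and>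
                    (r \<longrightarrow> justified_threshold (set us) d \<alpha> L S0 w)"
    and start: "p = 0 \<or> (\<forall>x\<in>set us. screened L S (d * (1 - \<alpha>) ^ (p - 1)) x)"
    and visited: "\<forall>x\<in>D. \<kappa> \<le> card S \<or> screened L S ?w x"
    unfolding ctg_pass_inv_def ctg_log_inv_def by auto
  have grow: "S \<subseteq> S'" "S' \<subseteq> set us" "set L \<subseteq> set L'"
    using S u unfolding S'_def L'_def by auto
  have full: "\<kappa> \<le> card S'" if "\<kappa> \<le> card S"
    using that card_mono[OF finite_subset[OF grow(2) finite_set] grow(1)] by linarith
  have "\<forall>k<length L'. case L' ! k of (_, _, w, r) \<Rightarrow> r = CS R (length us) \<kappa> \<alpha> \<epsilon> \<delta> w (smp k)"
    using consistent unfolding L'_def r_def by (auto simp: nth_append less_Suc_eq)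
  moreover have "justified_threshold (set us) d \<alpha> L' S ?w"
    unfolding justified_threshold_def using start screened_mono[OF _ grow(3) order_refl] by blast
  then have "\<forall>(S0, v, w, r)\<in>set L'. S0 \<subseteq> S' \<and> v \<in> set us \<and>
               (r \<longrightarrow> justified_threshold (set us) d \<alpha> L' S0 w)"
    using entries grow u justified_threshold_mono[OF _ grow(3)] unfolding L'_def by fastforce
  moreover have "p = 0 \<or> (\<forall>x\<in>set us. screened L' S' (d * (1 - \<alpha>) ^ (p - 1)) x)"
    using start screened_mono[OF _ grow(3) grow(1)] by blast
  moreover have "screened L' S' ?w u"
    unfolding screened_def S'_def L'_def by auto
  then have "\<forall>x\<in>insert u D. \<kappa> \<le> card S' \<or> screened L' S' ?w x"
    using visited full screened_mono[OF _ grow(3) grow(1)] by blast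
  ultimately show ?thesis
    unfolding step ctg_pass_inv_def ctg_log_inv_def using grow(2) by auto
qed

lemma ctg_pass_inv_foldl:
  "ctg_pass_inv p D st \<Longrightarrow> set xs \<subseteq> set us \<Longrightarrow>
   ctg_pass_inv p (D \<union> set xs) (foldl (ctg_step R (length us) \<kappa> \<alpha> \<epsilon> \<delta> (d * (1 - \<alpha>) ^ p) smp) st xs)"
proof (induction xs arbitrary: D st)
  case Nil
  then show ?case by simp
next
  case (Cons x xs)
  obtain S L where st: "st = (S, L)" by fastforce
  have "ctg_pass_inv p (insert x D) (ctg_step R (length us) \<kappa> \<alpha> \<epsilon> \<delta> (d * (1 - \<alpha>) ^ p) smp st x)"
    using ctg_pass_inv_step Cons.prems unfolding st by simp
  from Cons.IH[OF this] Cons.prems show ?case by simp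
qed

lemma ctg_pass_inv_ctg_pass:
  assumes "ctg_pass_inv p {} st"
  shows "ctg_pass_inv (Suc p) {} (ctg_pass R \<kappa> \<alpha> \<epsilon> \<delta> us (d * (1 - \<alpha>) ^ p) smp st)"
proof -
  obtain S L where pass: "ctg_pass R \<kappa> \<alpha> \<epsilon> \<delta> us (d * (1 - \<alpha>) ^ p) smp st = (S, L)"
    by fastforce
  have "ctg_pass_inv p (set us) (S, L)"
    using ctg_pass_inv_foldl[OF assms order_refl] pass unfolding ctg_pass_def by simp
  then show ?thesis
    unfolding pass ctg_pass_inv_def by auto
qed

lemma ctg_log_inv_passes:
  "ctg_log_inv (foldl (\<lambda>st p. ctg_pass R \<kappa> \<alpha> \<epsilon> \<delta> us (d * (1 - \<alpha>) ^ p) smp st) ({}, []) [0..<N])"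
proof -
  have "ctg_pass_inv N {} (foldl (\<lambda>st p. ctg_pass R \<kappa> \<alpha> \<epsilon> \<delta> us (d * (1 - \<alpha>) ^ p) smp st) ({}, []) [0..<N])"
  proof (induction N)
    case 0
    then show ?case by (simp add: ctg_pass_inv_def ctg_log_inv_def)
  next
    case (Suc N)
    then show ?case by (simp add: ctg_pass_inv_ctg_pass)
  qed
  then show ?thesis
    unfolding ctg_pass_inv_def by simp
qed

end

lemma ctg_run_log:
  assumes "ctg_run R \<kappa> \<alpha> \<epsilon> \<delta> us smp0 smp = (S\<^sub>f, L)"
  shows "\<forall>k<length L. case L ! k of (_, _, w, r) \<Rightarrow> r = CS R (length us) \<kappa> \<alpha> \<epsilon> \<delta> w (smp k)"
    and "(S, u, w, r) \<in> set L \<Longrightarrow> S \<subseteq> set us \<and> u \<in> set us \<and>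
           (r \<longrightarrow> justified_threshold (set us) (ctg_d R \<epsilon> \<delta> us smp0) \<alpha> L S w)"
proof -
  have "ctg_log_inv R \<kappa> \<alpha> \<epsilon> \<delta> us smp (ctg_d R \<epsilon> \<delta> us smp0) (S\<^sub>f, L)"
    using ctg_log_inv_passes assms unfolding ctg_run_def Let_def by metis
  then show "\<forall>k<length L. case L ! k of (_, _, w, r) \<Rightarrow> r = CS R (length us) \<kappa> \<alpha> \<epsilon> \<delta> w (smp k)"
    and "(S, u, w, r) \<in> set L \<Longrightarrow> S \<subseteq> set us \<and> u \<in> set us \<and>
           (r \<longrightarrow> justified_threshold (set us) (ctg_d R \<epsilon> \<delta> us smp0) \<alpha> L S w)"
    unfolding ctg_log_inv_def by fastforce+
qed

theorem lemma5:
  fixes us :: "'a list" and f :: "'a set \<Rightarrow> real" and \<kappa> :: nat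
    and R \<epsilon> \<delta> \<alpha> :: real and OPT :: "'a set"
    and smp0 :: "'a \<Rightarrow> nat \<Rightarrow> real" and smp :: "nat \<Rightarrow> nat \<Rightarrow> real"
  assumes dist: "distinct us"
    and mono: "monotone_set_fun (set us) f"
    and submod: "submodular_set_fun (set us) f"
    and nonneg: "\<forall>X \<subseteq> set us. f X \<ge> 0"
    and f_empty: "f {} = 0"
    and kappa: "\<kappa> > 0"
    and OPT: "OPT \<subseteq> set us" "card OPT \<le> \<kappa>"
    and OPT_max: "\<forall>X. X \<subseteq> set us \<and> card X \<le> \<kappa> \<longrightarrow> f X \<le> f OPT"
    and R: "R > 0"
    and params: "0 < \<epsilon>" "\<epsilon> < 1" "0 < \<delta>" "\<delta> < 1" "0 < \<alpha>" "\<alpha> < 1"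
    and smp0_range: "\<forall>s\<in>set us. \<forall>i. 0 \<le> smp0 s i \<and> smp0 s i \<le> R"
    and smp_range: "\<forall>k i. 0 \<le> smp k i \<and> smp k i \<le> R"
    and E1: "Max ((\<lambda>s. f {s}) ` set us) - \<epsilon> \<le> ctg_d R \<epsilon> \<delta> us smp0 \<and>
             ctg_d R \<epsilon> \<delta> us smp0 \<le> Max ((\<lambda>s. f {s}) ` set us) + \<epsilon>"
    and E2: "\<forall>k < length (snd (ctg_run R \<kappa> \<alpha> \<epsilon> \<delta> us smp0 smp)).
               \<forall>S u w r. snd (ctg_run R \<kappa> \<alpha> \<epsilon> \<delta> us smp0 smp) ! k = (S, u, w, r) \<longrightarrow>
                 (\<forall>t\<ge>1. \<bar>avg (smp k) t - Delta f S u\<bar> \<le> Ct R (length us) \<kappa> \<alpha> \<delta> t)"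
    and E3: "\<forall>k < length (snd (ctg_run R \<kappa> \<alpha> \<epsilon> \<delta> us smp0 smp)).
               \<forall>S u w r. snd (ctg_run R \<kappa> \<alpha> \<epsilon> \<delta> us smp0 smp) ! k = (S, u, w, r) \<longrightarrow>
                 \<bar>avg (smp k) (N2 R (length us) \<kappa> \<alpha> \<epsilon> \<delta>) - Delta f S u\<bar> \<le> \<epsilon>"
  shows "\<forall>(S, s, w, r) \<in> set (snd (ctg_run R \<kappa> \<alpha> \<epsilon> \<delta> us smp0 smp)).
           r \<longrightarrow> Delta f S s \<ge> (1 - \<alpha>) / real \<kappa> * (f OPT - f S) - 2 * \<epsilon>"
proof (intro ballI, clarify)
  fix S s w r
  assume "(S, s, w, r) \<in> set (snd (ctg_run R \<kappa> \<alpha> \<epsilon> \<delta> us smp0 smp))" and r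
  obtain S\<^sub>f L where run: "ctg_run R \<kappa> \<alpha> \<epsilon> \<delta> us smp0 smp = (S\<^sub>f, L)" by fastforce
  with \<open>(S, s, w, r) \<in> _\<close> \<open>r\<close> have entry: "(S, s, w, True) \<in> set L" by simp
  have sound: "(r \<longrightarrow> v - \<epsilon> \<le> Delta f S' u) \<and> (\<not> r \<longrightarrow> Delta f S' u \<le> v + \<epsilon>)"
    if "(S', u, v, r) \<in> set L" for S' u v r
    using CS_log_sound[OF ctg_run_log(1)[OF run] _ _ that] E2 E3 run by simp
  then have rejected: "\<forall>(S', y, v, r)\<in>set L. \<not> r \<longrightarrow> Delta f S' y \<le> v + \<epsilon>"
    by fastforce
  have S: "S \<subseteq> set us" and s: "s \<in> set us"
    and justified: "justified_threshold (set us) (ctg_d R \<epsilon> \<delta> us smp0) \<alpha> L S w"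
    using ctg_run_log(2)[OF run entry] by auto
  have d: "0 \<le> ctg_d R \<epsilon> \<delta> us smp0" "Max ((\<lambda>x. f {x}) ` set us) \<le> ctg_d R \<epsilon> \<delta> us smp0 + \<epsilon>"
    using ctg_d_nonneg[OF s] smp0_range E1 by auto
  have singletons: "\<forall>x\<in>set us. 0 \<le> f {x}" and "set us \<noteq> {}"
    using nonneg s by auto
  from justified_threshold_Delta_bound[OF submod f_empty singletons finite_set this(2) S justified d
      less_imp_le[OF params(5)] less_imp_le[OF params(6)] less_imp_le[OF params(1)] rejected]
  obtain B where B: "0 \<le> B" "(1 - \<alpha>) * B \<le> w + \<epsilon>" "\<forall>x\<in>set us - S. Delta f S x \<le> B"
    by blast
  show "Delta f S s \<ge> (1 - \<alpha>) / real \<kappa> * (f OPT - f S) - 2 * \<epsilon>"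
  proof (rule Delta_ge_scaled_optimality_gap[OF mono submod S OPT(1) finite_subset[OF OPT(1)] OPT(2) kappa])
    show "\<forall>x\<in>OPT - S. Delta f S x \<le> B" using B(3) OPT(1) by blast
    show "w - \<epsilon> \<le> Delta f S s" using sound[OF entry] by simp
  qed (use B params in auto)
qed

end
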